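(* Let $V$ be a simple Lie triple system over a field of characteristic $0$ such that every element of $U(V)$ that commutes with all elements of $V$ is of the form $c1+x$ with $c\in F$ and $x\in V$. Then every nonzero proper two-sided ideal of $U(V)$ equals the augmentation ideal $\ker\epsilon$.
   Context: A Lie triple system (L.t.s.) is a vector space $V$ with trilinear product $[\cdot,\cdot,\cdot]$ satisfying $[a,a,b]=0$, $[a,b,c]+[b,c,a]+[c,a,b]=0$, $[x,y,[a,b,c]]=[[x,y,a],b,c]+[a,[x,y,b],c]+[a,b,[x,y,c]]$. An ideal is a subspace $I$ with $[I,V,V]\subseteq I$; $V$ is simple if $[V,V,V]\ne0$ and its only ideals are $0$ and $V$. The universal enveloping algebra $U(V)$ (in the sense of Pérez-Izquierdo, $V$ viewed as a Bol algebra with zero binary bracket) is a unital non-associative bialgebra generated as a unital algebra by $V\subseteq U(V)$, $V$ being its primitive elements, satisfying $\sum a_{(1)}(y(a_{(2)}z))=\sum (a_{(1)}(ya_{(2)}))z$, with $ab=ba$ and $a(bc)-b(ac)=[a,b,c]$ for $a,b,c\in V$; it has the PBW filtration $U(V)_n$ (span of products of at most $n$ elements of $V$), with $[a,U(V)_n]\subseteq U(V)_{n-1}$ for $a\in V$. $\epsilon$ is the counit and $\ker\epsilon$ is the ideal generated by $V$. *)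

theory Defs
  imports Main "HOL.Vector_Spaces"
begin

text \<open>
  The universal enveloping algebra U(V) is the whole type 'u, a 'k-vector space with scalar
  multiplication sc, a bilinear (non-associative) multiplication mul with unit one.
\<close>

definition lin_form :: "('k::field \<Rightarrow> 'u::ab_group_add \<Rightarrow> 'u) \<Rightarrow> ('u \<Rightarrow> 'k) \<Rightarrow> bool" where
  "lin_form sc f \<longleftrightarrow> (\<forall>x y. f (x + y) = f x + f y) \<and> (\<forall>c x. f (sc c x) = c * f x)"

definition lin_map :: "('k::field \<Rightarrow> 'u::ab_group_add \<Rightarrow> 'u) \<Rightarrow> ('u \<Rightarrow> 'u) \<Rightarrow> bool" where
  "lin_map sc f \<longleftrightarrow> (\<forall>x y. f (x + y) = f x + f y) \<and> (\<forall>c x. f (sc c x) = sc c (f x))"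

definition bilin_form :: "('k::field \<Rightarrow> 'u::ab_group_add \<Rightarrow> 'u) \<Rightarrow> ('u \<Rightarrow> 'u \<Rightarrow> 'k) \<Rightarrow> bool" where
  "bilin_form sc b \<longleftrightarrow> (\<forall>x. lin_form sc (b x)) \<and> (\<forall>y. lin_form sc (\<lambda>x. b x y))"

definition trilin_form :: "('k::field \<Rightarrow> 'u::ab_group_add \<Rightarrow> 'u) \<Rightarrow> ('u \<Rightarrow> 'u \<Rightarrow> 'u \<Rightarrow> 'k) \<Rightarrow> bool" where
  "trilin_form sc g \<longleftrightarrow> (\<forall>x y. lin_form sc (g x y)) \<and> (\<forall>x z. lin_form sc (\<lambda>y. g x y z))
      \<and> (\<forall>y z. lin_form sc (\<lambda>x. g x y z))"

definition bilin_map :: "('k::field \<Rightarrow> 'u::ab_group_add \<Rightarrow> 'u) \<Rightarrow> ('u \<Rightarrow> 'u \<Rightarrow> 'u) \<Rightarrow> bool" where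
  "bilin_map sc m \<longleftrightarrow> (\<forall>x. lin_map sc (m x)) \<and> (\<forall>y. lin_map sc (\<lambda>x. m x y))"

text \<open>
  Elements of U \<otimes> U are represented by finite lists of pairs (p,q), standing for the sum of
  the tensors p \<otimes> q.  Two representatives denote the same tensor iff every bilinear form takes
  the same value on them (linear functionals on U \<otimes> U separate points).
\<close>

definition tens_eq :: "('k::field \<Rightarrow> 'u::ab_group_add \<Rightarrow> 'u) \<Rightarrow> ('u \<times> 'u) list \<Rightarrow> ('u \<times> 'u) list \<Rightarrow> bool" where
  "tens_eq sc xs ys \<longleftrightarrow> (\<forall>b. bilin_form sc b \<longrightarrow>
      (\<Sum>(p,q)\<leftarrow>xs. b p q) = (\<Sum>(p,q)\<leftarrow>ys. b p q))"

definition nonassoc_bialgebra ::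
  "('k::field \<Rightarrow> 'u::ab_group_add \<Rightarrow> 'u) \<Rightarrow> ('u \<Rightarrow> 'u \<Rightarrow> 'u) \<Rightarrow> 'u
    \<Rightarrow> ('u \<Rightarrow> ('u \<times> 'u) list) \<Rightarrow> ('u \<Rightarrow> 'k) \<Rightarrow> bool" where
  "nonassoc_bialgebra sc mul one cop eps \<longleftrightarrow>
     vector_space sc \<and> bilin_map sc mul \<and>
     (\<forall>x. mul one x = x \<and> mul x one = x) \<and>
     \<comment> \<open>comultiplication is linear\<close>
     (\<forall>x y. tens_eq sc (cop (x + y)) (cop x @ cop y)) \<and>
     (\<forall>c x. tens_eq sc (cop (sc c x)) (map (\<lambda>(p,q). (sc c p, q)) (cop x))) \<and>
     \<comment> \<open>coassociativity\<close>
     (\<forall>x g. trilin_form sc g \<longrightarrow>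
        (\<Sum>(p,q)\<leftarrow>cop x. \<Sum>(p1,p2)\<leftarrow>cop p. g p1 p2 q)
      = (\<Sum>(p,q)\<leftarrow>cop x. \<Sum>(q1,q2)\<leftarrow>cop q. g p q1 q2)) \<and>
     \<comment> \<open>counit\<close>
     lin_form sc eps \<and>
     (\<forall>x. (\<Sum>(p,q)\<leftarrow>cop x. sc (eps p) q) = x \<and> (\<Sum>(p,q)\<leftarrow>cop x. sc (eps q) p) = x) \<and>
     \<comment> \<open>comultiplication and counit are unital algebra homomorphisms\<close>
     (\<forall>x y. tens_eq sc (cop (mul x y))
        (concat (map (\<lambda>(p,q). map (\<lambda>(p',q'). (mul p p', mul q q')) (cop y)) (cop x)))) \<and>
     tens_eq sc (cop one) [(one, one)] \<and>
     (\<forall>x y. eps (mul x y) = eps x * eps y) \<and> eps one = 1"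

definition primitives ::
  "('k::field \<Rightarrow> 'u::ab_group_add \<Rightarrow> 'u) \<Rightarrow> 'u \<Rightarrow> ('u \<Rightarrow> ('u \<times> 'u) list) \<Rightarrow> 'u set" where
  "primitives sc one cop = {x. tens_eq sc (cop x) [(x, one), (one, x)]}"

inductive pbw_mono :: "('u \<Rightarrow> 'u \<Rightarrow> 'u) \<Rightarrow> 'u \<Rightarrow> 'u set \<Rightarrow> nat \<Rightarrow> 'u \<Rightarrow> bool"
  for mul :: "'u \<Rightarrow> 'u \<Rightarrow> 'u" and one :: 'u and V :: "'u set" where
  mono_one: "pbw_mono mul one V n one"
| mono_gen: "x \<in> V \<Longrightarrow> 1 \<le> n \<Longrightarrow> pbw_mono mul one V n x"
| mono_mul: "pbw_mono mul one V i x \<Longrightarrow> pbw_mono mul one V j y \<Longrightarrow> i + j \<le> n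
              \<Longrightarrow> pbw_mono mul one V n (mul x y)"

definition pbw_filt ::
  "('k::field \<Rightarrow> 'u::ab_group_add \<Rightarrow> 'u) \<Rightarrow> ('u \<Rightarrow> 'u \<Rightarrow> 'u) \<Rightarrow> 'u \<Rightarrow> 'u set \<Rightarrow> nat \<Rightarrow> 'u set" where
  "pbw_filt sc mul one V n = module.span sc {x. pbw_mono mul one V n x}"

definition lie_triple_system :: "('k::field \<Rightarrow> 'u::ab_group_add \<Rightarrow> 'u) \<Rightarrow> 'u set
    \<Rightarrow> ('u \<Rightarrow> 'u \<Rightarrow> 'u \<Rightarrow> 'u) \<Rightarrow> bool" where
  "lie_triple_system sc V tp \<longleftrightarrow>
     module.subspace sc V \<and>
     (\<forall>a\<in>V. \<forall>b\<in>V. \<forall>c\<in>V. tp a b c \<in> V) \<and>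
     (\<forall>b\<in>V. \<forall>c\<in>V. \<forall>x\<in>V. \<forall>y\<in>V. \<forall>k.
        tp (x + sc k y) b c = tp x b c + sc k (tp y b c) \<and>
        tp b (x + sc k y) c = tp b x c + sc k (tp b y c) \<and>
        tp b c (x + sc k y) = tp b c x + sc k (tp b c y)) \<and>
     (\<forall>a\<in>V. \<forall>b\<in>V. tp a a b = 0) \<and>
     (\<forall>a\<in>V. \<forall>b\<in>V. \<forall>c\<in>V. tp a b c + tp b c a + tp c a b = 0) \<and>
     (\<forall>x\<in>V. \<forall>y\<in>V. \<forall>a\<in>V. \<forall>b\<in>V. \<forall>c\<in>V.
        tp x y (tp a b c) = tp (tp x y a) b c + tp a (tp x y b) c + tp a b (tp x y c))"

definition lts_ideal :: "('k::field \<Rightarrow> 'u::ab_group_add \<Rightarrow> 'u) \<Rightarrow> 'u set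
    \<Rightarrow> ('u \<Rightarrow> 'u \<Rightarrow> 'u \<Rightarrow> 'u) \<Rightarrow> 'u set \<Rightarrow> bool" where
  "lts_ideal sc V tp I \<longleftrightarrow> module.subspace sc I \<and> I \<subseteq> V \<and>
     (\<forall>i\<in>I. \<forall>a\<in>V. \<forall>b\<in>V. tp i a b \<in> I)"

definition simple_lts :: "('k::field \<Rightarrow> 'u::ab_group_add \<Rightarrow> 'u) \<Rightarrow> 'u set
    \<Rightarrow> ('u \<Rightarrow> 'u \<Rightarrow> 'u \<Rightarrow> 'u) \<Rightarrow> bool" where
  "simple_lts sc V tp \<longleftrightarrow> lie_triple_system sc V tp \<and>
     (\<exists>a\<in>V. \<exists>b\<in>V. \<exists>c\<in>V. tp a b c \<noteq> 0) \<and>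
     (\<forall>I. lts_ideal sc V tp I \<longrightarrow> I = {0} \<or> I = V)"

text \<open>
  (U, mul, one, cop, eps) is the universal enveloping algebra U(V) of the L.t.s. (V, tp)
  (in the sense of Perez-Izquierdo, V viewed as a Bol algebra with zero binary product),
  characterised by the properties listed in the paper.
\<close>

definition is_env_algebra ::
  "('k::field \<Rightarrow> 'u::ab_group_add \<Rightarrow> 'u) \<Rightarrow> ('u \<Rightarrow> 'u \<Rightarrow> 'u) \<Rightarrow> 'u
    \<Rightarrow> ('u \<Rightarrow> ('u \<times> 'u) list) \<Rightarrow> ('u \<Rightarrow> 'k) \<Rightarrow> 'u set \<Rightarrow> ('u \<Rightarrow> 'u \<Rightarrow> 'u \<Rightarrow> 'u) \<Rightarrow> bool" where
  "is_env_algebra sc mul one cop eps V tp \<longleftrightarrow>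
     nonassoc_bialgebra sc mul one cop eps \<and>
     \<comment> \<open>V is exactly the set of primitive elements\<close>
     primitives sc one cop = V \<and>
     \<comment> \<open>generated by V as a unital algebra\<close>
     (\<forall>S. module.subspace sc S \<and> one \<in> S \<and> V \<subseteq> S \<and> (\<forall>x\<in>S. \<forall>y\<in>S. mul x y \<in> S)
          \<longrightarrow> S = UNIV) \<and>
     \<comment> \<open>left Bol identity in Hopf form\<close>
     (\<forall>a y z. (\<Sum>(p,q)\<leftarrow>cop a. mul p (mul y (mul q z)))
            = (\<Sum>(p,q)\<leftarrow>cop a. mul (mul p (mul y q)) z)) \<and>
     (\<forall>a\<in>V. \<forall>b\<in>V. mul a b = mul b a) \<and>
     (\<forall>a\<in>V. \<forall>b\<in>V. \<forall>c\<in>V. mul a (mul b c) - mul b (mul a c) = tp a b c) \<and>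
     \<comment> \<open>PBW filtration property\<close>
     (\<forall>a\<in>V. \<forall>n u. u \<in> pbw_filt sc mul one V (Suc n)
          \<longrightarrow> mul a u - mul u a \<in> pbw_filt sc mul one V n)"

definition two_sided_ideal :: "('k::field \<Rightarrow> 'u::ab_group_add \<Rightarrow> 'u) \<Rightarrow> ('u \<Rightarrow> 'u \<Rightarrow> 'u) \<Rightarrow> 'u set \<Rightarrow> bool" where
  "two_sided_ideal sc mul I \<longleftrightarrow> module.subspace sc I \<and>
     (\<forall>x\<in>I. \<forall>u. mul u x \<in> I \<and> mul x u \<in> I)"

end

theory Submission
  imports Defs
begin

text \<open>
  A nonzero element u of the ideal I of least PBW degree commutes with V, because each
  commutator [a, u] with a in V lies in I and has smaller degree.  By hypothesis u = c 1 + x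
  with x in V, and then [x, a, b] = u(ab) - a(ub) lies in I for all a, b in V.  The L.t.s. ideal
  I \<inter> V is 0 or V; if it were 0, x would annihilate V, so x = 0 by simplicity and 1 \<in> I.
  Hence V \<subseteq> I.  The counit vanishes on [V, V, V], hence on the simple system V, so
  J = I \<inter> ker \<epsilon> is an ideal containing V.  Then J plus the scalar multiples of 1 is a unital
  subalgebra containing V, i.e. all of U(V), and I = ker \<epsilon> follows from 1 \<notin> I.
\<close>

context vector_space
begin

lemma lin_form_additive: "lin_form scale f \<Longrightarrow> additive f"
  by unfold_locales (simp add: lin_form_def)

lemma lts_tp_zero_left:
  assumes "lie_triple_system scale V tp" "b \<in> V" "c \<in> V"
  shows "tp 0 b c = 0"
proof -
  have "0 \<in> V" using assms(1) subspace_0 by (simp add: lie_triple_system_def)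
  then have "tp (0 + 1 *s 0) b c = tp 0 b c + 1 *s tp 0 b c"
    using assms unfolding lie_triple_system_def by blast
  then show ?thesis by simp
qed

lemma lts_tp_add_left:
  assumes "lie_triple_system scale V tp" "y \<in> V" "z \<in> V" "b \<in> V" "c \<in> V"
  shows "tp (y + z) b c = tp y b c + tp z b c"
  using assms unfolding lie_triple_system_def by (metis scale_one)

lemma lts_tp_scale_left:
  assumes "lie_triple_system scale V tp" "z \<in> V" "b \<in> V" "c \<in> V"
  shows "tp (k *s z) b c = k *s tp z b c"
proof -
  have "0 \<in> V" using assms(1) subspace_0 by (simp add: lie_triple_system_def)
  then have "tp (0 + k *s z) b c = tp 0 b c + k *s tp z b c"
    using assms unfolding lie_triple_system_def by blast
  then show ?thesis using lts_tp_zero_left[OF assms(1,3,4)] by simp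
qed

lemma lts_ideal_annihilator:
  assumes lts: "lie_triple_system scale V tp"
  shows "lts_ideal scale V tp {z \<in> V. \<forall>a\<in>V. \<forall>b\<in>V. tp z a b = 0}"
proof -
  have V: "subspace V" using lts by (simp add: lie_triple_system_def)
  show ?thesis
    unfolding lts_ideal_def
    by (auto intro!: subspaceI simp: subspace_0[OF V] subspace_add[OF V] subspace_scale[OF V]
        lts_tp_zero_left[OF lts] lts_tp_add_left[OF lts] lts_tp_scale_left[OF lts])
qed

lemma simple_lts_annihilator_trivial:
  assumes simple: "simple_lts scale V tp" and "z \<in> V" "\<And>a b. a \<in> V \<Longrightarrow> b \<in> V \<Longrightarrow> tp z a b = 0"
  shows "z = 0"
proof -
  let ?A = "{z \<in> V. \<forall>a\<in>V. \<forall>b\<in>V. tp z a b = 0}"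
  have "?A = {0} \<or> ?A = V"
    using simple lts_ideal_annihilator by (simp add: simple_lts_def)
  moreover have "?A \<noteq> V" using simple by (auto simp: simple_lts_def)
  ultimately show ?thesis using assms(2,3) by blast
qed

lemma lts_ideal_kernel:
  assumes lts: "lie_triple_system scale V tp" and f: "lin_form scale f"
    and tp: "\<And>a b c. a \<in> V \<Longrightarrow> b \<in> V \<Longrightarrow> c \<in> V \<Longrightarrow> f (tp a b c) = 0"
  shows "lts_ideal scale V tp {v \<in> V. f v = 0}"
proof -
  have V: "subspace V" and tpV: "\<And>a b c. a \<in> V \<Longrightarrow> b \<in> V \<Longrightarrow> c \<in> V \<Longrightarrow> tp a b c \<in> V"
    using lts by (simp_all add: lie_triple_system_def)
  interpret additive f using f by (rule lin_form_additive)
  show ?thesis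
    using f tp tpV unfolding lts_ideal_def lin_form_def
    by (auto intro!: subspaceI simp: subspace_0[OF V] subspace_add[OF V] subspace_scale[OF V] zero)
qed

lemma simple_lts_lin_form_vanishes:
  assumes simple: "simple_lts scale V tp" and f: "lin_form scale f"
    and tp: "\<And>a b c. a \<in> V \<Longrightarrow> b \<in> V \<Longrightarrow> c \<in> V \<Longrightarrow> f (tp a b c) = 0"
    and "v \<in> V"
  shows "f v = 0"
proof -
  let ?K = "{v \<in> V. f v = 0}"
  have lts: "lie_triple_system scale V tp" using simple by (simp add: simple_lts_def)
  have "?K = {0} \<or> ?K = V"
    using simple lts_ideal_kernel[OF lts f tp] by (simp add: simple_lts_def)
  moreover obtain a b c where "a \<in> V" "b \<in> V" "c \<in> V" "tp a b c \<noteq> 0"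
    using simple by (auto simp: simple_lts_def)
  then have "tp a b c \<in> ?K - {0}" using lts tp by (simp add: lie_triple_system_def)
  ultimately show ?thesis using \<open>v \<in> V\<close> by blast
qed

lemma scale_mem_subspace_imp_zero:
  assumes "subspace S" "c *s x \<in> S" "x \<notin> S"
  shows "c = 0"
proof (rule ccontr)
  assume "c \<noteq> 0"
  then have "x = inverse c *s c *s x" by simp
  then show False using assms subspace_scale by metis
qed

lemma eq_kernel_of_decomposition:
  assumes "subspace I" "e \<notin> I" "lin_form scale f" "f e = 1"
    and decomp: "\<And>w. \<exists>j \<in> I. f j = 0 \<and> (\<exists>c. w = j + c *s e)"
  shows "I = {u. f u = 0}"
proof (intro set_eqI iffI)
  fix w
  obtain j c where j: "j \<in> I" "f j = 0" and w: "w = j + c *s e" using decomp by blast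
  have fw: "f w = c" using assms(3,4) j w by (simp add: lin_form_def)
  show "w \<in> {u. f u = 0}" if "w \<in> I"
  proof -
    have "c *s e \<in> I" using subspace_diff[OF assms(1) that j(1)] w by simp
    then show ?thesis using fw scale_mem_subspace_imp_zero[OF assms(1) _ assms(2)] by simp
  qed
  show "w \<in> I" if "w \<in> {u. f u = 0}" using that fw w j by simp
qed

end

locale unital_algebra = vector_space sc
  for sc :: "'k::field \<Rightarrow> 'u::ab_group_add \<Rightarrow> 'u" +
  fixes mul :: "'u \<Rightarrow> 'u \<Rightarrow> 'u" and one :: 'u
  assumes bilinear: "bilin_map sc mul"
    and mul_one_left [simp]: "mul one x = x"
    and mul_one_right [simp]: "mul x one = x"
begin

lemma additive_mul_left: "additive (\<lambda>x. mul x y)"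
  using bilinear by unfold_locales (simp add: bilin_map_def lin_map_def)

lemma additive_mul_right: "additive (mul x)"
  using bilinear by unfold_locales (simp add: bilin_map_def lin_map_def)

lemma mul_scale_left [simp]: "mul (sc c x) y = sc c (mul x y)"
  using bilinear by (simp add: bilin_map_def lin_map_def)

lemma mul_scale_right [simp]: "mul x (sc c y) = sc c (mul x y)"
  using bilinear by (simp add: bilin_map_def lin_map_def)

lemmas mul_add_left = additive.add[OF additive_mul_left]
  and mul_add_right = additive.add[OF additive_mul_right]
  and mul_zero_left [simp] = additive.zero[OF additive_mul_left]
  and mul_zero_right [simp] = additive.zero[OF additive_mul_right]

lemma mul_span_subspace:
  assumes T: "subspace T" and AB: "\<And>x y. x \<in> A \<Longrightarrow> y \<in> B \<Longrightarrow> mul x y \<in> T"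
    and "x \<in> span A" "y \<in> span B"
  shows "mul x y \<in> T"
proof -
  have "y \<in> {y. mul x y \<in> T}" if "x \<in> A" for x
    by (rule span_subspace_induct[OF \<open>y \<in> span B\<close>])
      (auto intro!: subspaceI simp: that AB mul_add_right subspace_0[OF T] subspace_add[OF T]
        subspace_scale[OF T])
  then have "x \<in> {x. mul x y \<in> T}"
    by (intro span_subspace_induct[OF \<open>x \<in> span A\<close>])
      (auto intro!: subspaceI simp: mul_add_left subspace_0[OF T] subspace_add[OF T]
        subspace_scale[OF T])
  then show ?thesis by simp
qed

lemma pbw_filt_mono:
  assumes "i \<le> n" shows "pbw_filt sc mul one V i \<subseteq> pbw_filt sc mul one V n"
proof -
  have "pbw_mono mul one V n x" if "pbw_mono mul one V i x" for x
    using that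
  proof cases
    case mono_gen then show ?thesis using assms by (auto intro: pbw_mono.mono_gen)
  next
    case mono_mul then show ?thesis using assms by (auto intro: pbw_mono.mono_mul)
  qed (simp add: pbw_mono.mono_one)
  then show ?thesis unfolding pbw_filt_def by (intro span_mono) blast
qed

lemma pbw_filt_mul:
  assumes "x \<in> pbw_filt sc mul one V n" "y \<in> pbw_filt sc mul one V m"
  shows "mul x y \<in> pbw_filt sc mul one V (n + m)"
proof -
  have "mul x y \<in> span {z. pbw_mono mul one V (n + m) z}"
    if "x \<in> {z. pbw_mono mul one V n z}" "y \<in> {z. pbw_mono mul one V m z}" for x y
    using that by (intro span_base) (simp add: pbw_mono.mono_mul)
  from this assms show ?thesis
    unfolding pbw_filt_def by (rule mul_span_subspace[OF subspace_span])
qed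

lemma one_in_pbw_filt: "one \<in> pbw_filt sc mul one V n"
  unfolding pbw_filt_def by (intro span_base) (simp add: pbw_mono.mono_one)

lemma subset_pbw_filt: "1 \<le> n \<Longrightarrow> V \<subseteq> pbw_filt sc mul one V n"
  unfolding pbw_filt_def by (auto intro!: span_base intro: pbw_mono.mono_gen)

lemma pbw_filt_zero:
  assumes "u \<in> pbw_filt sc mul one V 0" shows "\<exists>c. u = sc c one"
proof -
  have "x = one" if "pbw_mono mul one V n x" "n = 0" for n x
    using that by (induction rule: pbw_mono.induct) auto
  then have "pbw_filt sc mul one V 0 \<subseteq> span {one}"
    unfolding pbw_filt_def by (intro span_mono) blast
  then show ?thesis using assms by (auto simp: span_singleton)
qed

lemma two_sided_ideal_eq_UNIV_iff:
  assumes "two_sided_ideal sc mul I" shows "I = UNIV \<longleftrightarrow> one \<in> I"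
  using assms mul_one_right by (auto simp: two_sided_ideal_def)

lemma two_sided_ideal_scalar_one:
  assumes I: "two_sided_ideal sc mul I" "I \<noteq> UNIV" and "sc c one \<in> I"
  shows "c = 0"
  using I assms(3) two_sided_ideal_eq_UNIV_iff scale_mem_subspace_imp_zero
  by (auto simp: two_sided_ideal_def)

lemma two_sided_ideal_Int:
  "two_sided_ideal sc mul I \<Longrightarrow> two_sided_ideal sc mul J \<Longrightarrow> two_sided_ideal sc mul (I \<inter> J)"
  by (simp add: two_sided_ideal_def subspace_inter)

lemma two_sided_ideal_kernel:
  assumes f: "lin_form sc f" and mult: "\<And>x y. f (mul x y) = f x * f y"
  shows "two_sided_ideal sc mul {u. f u = 0}"
proof -
  interpret additive f using f by (rule lin_form_additive)
  show ?thesis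
    using f unfolding two_sided_ideal_def lin_form_def
    by (auto intro!: subspaceI simp: zero mult)
qed

lemma left_mul_commutator_in_ideal:
  assumes I: "two_sided_ideal sc mul I" and "sc c one + x \<in> I"
  shows "mul x (mul a b) - mul a (mul x b) \<in> I"
proof -
  let ?u = "sc c one + x"
  have "mul ?u (mul a b) - mul a (mul ?u b) = mul x (mul a b) - mul a (mul x b)"
    by (simp add: mul_add_left mul_add_right)
  moreover have "mul ?u (mul a b) - mul a (mul ?u b) \<in> I"
    using I assms(2) subspace_diff by (simp add: two_sided_ideal_def)
  ultimately show ?thesis by simp
qed

lemma lts_subset_ideal:
  assumes simple: "simple_lts sc V tp"
    and tp_mul: "\<And>a b c. a \<in> V \<Longrightarrow> b \<in> V \<Longrightarrow> c \<in> V \<Longrightarrow> mul a (mul b c) - mul b (mul a c) = tp a b c"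
    and I: "two_sided_ideal sc mul I" "I \<noteq> UNIV"
    and "x \<in> V" and u: "sc c one + x \<in> I" "sc c one + x \<noteq> 0"
  shows "V \<subseteq> I"
proof -
  have lts: "lie_triple_system sc V tp" using simple by (simp add: simple_lts_def)
  have tp_I: "tp y a b \<in> I" if "sc d one + y \<in> I" "y \<in> V" "a \<in> V" "b \<in> V" for d y a b
    using left_mul_commutator_in_ideal[OF I(1) that(1), where a = a and b = b] tp_mul[OF that(2-4)]
    by simp
  have "lts_ideal sc V tp (I \<inter> V)"
    unfolding lts_ideal_def
  proof (intro conjI ballI)
    show "subspace (I \<inter> V)"
      using I(1) lts by (simp add: two_sided_ideal_def lie_triple_system_def subspace_inter)
    show "tp i a b \<in> I \<inter> V" if "i \<in> I \<inter> V" "a \<in> V" "b \<in> V" for i a b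
      using that tp_I[of 0 i a b] lts by (simp add: lie_triple_system_def)
  qed simp
  then have "I \<inter> V = {0} \<or> I \<inter> V = V" using simple by (simp add: simple_lts_def)
  moreover have "I \<inter> V \<noteq> {0}"
  proof
    assume "I \<inter> V = {0}"
    then have "tp x a b = 0" if "a \<in> V" "b \<in> V" for a b
      using tp_I[OF u(1) \<open>x \<in> V\<close> that] lts that \<open>x \<in> V\<close> by (auto simp: lie_triple_system_def)
    then have "x = 0" using simple_lts_annihilator_trivial[OF simple \<open>x \<in> V\<close>] by blast
    then show False using u two_sided_ideal_scalar_one[OF I] by simp
  qed
  ultimately show ?thesis by blast
qed

end

locale generated_algebra = unital_algebra sc mul one
  for sc :: "'k::field \<Rightarrow> 'u::ab_group_add \<Rightarrow> 'u" and mul one +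
  fixes V :: "'u set"
  assumes generated: "\<And>S. subspace S \<Longrightarrow> one \<in> S \<Longrightarrow> V \<subseteq> S \<Longrightarrow>
      (\<forall>x\<in>S. \<forall>y\<in>S. mul x y \<in> S) \<Longrightarrow> S = UNIV"
begin

lemma pbw_filt_exhaustive: "\<exists>n. u \<in> pbw_filt sc mul one V n"
proof -
  let ?S = "{u. \<exists>n. u \<in> pbw_filt sc mul one V n}"
  have "subspace ?S"
  proof (rule subspaceI)
    show "0 \<in> ?S" using span_zero by (auto simp: pbw_filt_def)
    show "x + y \<in> ?S" if x: "x \<in> ?S" and y: "y \<in> ?S" for x y
    proof -
      obtain n m where "x \<in> pbw_filt sc mul one V n" "y \<in> pbw_filt sc mul one V m"
        using x y by blast
      then have "x \<in> pbw_filt sc mul one V (n + m)" "y \<in> pbw_filt sc mul one V (n + m)"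
        using pbw_filt_mono[of n "n + m" V] pbw_filt_mono[of m "n + m" V] by auto
      then show ?thesis unfolding pbw_filt_def using span_add by blast
    qed
    show "sc c x \<in> ?S" if "x \<in> ?S" for c x
      using that span_scale by (auto simp: pbw_filt_def)
  qed
  moreover have "one \<in> ?S" using one_in_pbw_filt by blast
  moreover have "V \<subseteq> ?S" using subset_pbw_filt[of 1 V] by blast
  moreover have "\<forall>x\<in>?S. \<forall>y\<in>?S. mul x y \<in> ?S" using pbw_filt_mul by blast
  ultimately show ?thesis using generated by blast
qed

lemma ideal_plus_scalars_eq_UNIV:
  assumes J: "two_sided_ideal sc mul J" and "V \<subseteq> J"
  shows "\<exists>j\<in>J. \<exists>c. w = j + sc c one"
proof -
  let ?S = "{j + sc c one | j c. j \<in> J}"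
  have Jsub: "subspace J" and JI: "\<And>j u. j \<in> J \<Longrightarrow> mul u j \<in> J \<and> mul j u \<in> J"
    using J by (simp_all add: two_sided_ideal_def)
  have "subspace ?S"
  proof (rule subspaceI)
    show "0 \<in> ?S" using subspace_0[OF Jsub] by force
    show "x + y \<in> ?S" if x: "x \<in> ?S" and y: "y \<in> ?S" for x y
    proof -
      obtain j1 c1 j2 c2 where "j1 \<in> J" "j2 \<in> J" "x = j1 + sc c1 one" "y = j2 + sc c2 one"
        using x y by blast
      moreover have "x + y = (j1 + j2) + sc (c1 + c2) one"
        if "x = j1 + sc c1 one" "y = j2 + sc c2 one"
        using that by (simp add: scale_left_distrib algebra_simps)
      ultimately show ?thesis using subspace_add[OF Jsub] by blast
    qed
    show "sc d x \<in> ?S" if x: "x \<in> ?S" for d x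
    proof -
      obtain j c where "j \<in> J" "x = j + sc c one" using x by blast
      moreover have "sc d x = sc d j + sc (d * c) one" if "x = j + sc c one"
        using that by (simp add: scale_right_distrib)
      ultimately show ?thesis using subspace_scale[OF Jsub] by blast
    qed
  qed
  moreover have "one \<in> ?S"
    using subspace_0[OF Jsub] by (intro CollectI exI[of _ 0] exI[of _ 1]) simp
  moreover have "v \<in> ?S" if "v \<in> V" for v
    using \<open>V \<subseteq> J\<close> that by (intro CollectI exI[of _ v] exI[of _ 0]) auto
  moreover have "mul x y \<in> ?S" if x: "x \<in> ?S" and y: "y \<in> ?S" for x y
  proof -
    obtain j1 c1 j2 c2 where j: "j1 \<in> J" "j2 \<in> J" and xy: "x = j1 + sc c1 one" "y = j2 + sc c2 one"
      using x y by blast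
    have "mul x y = (mul j1 j2 + sc c2 j1 + sc c1 j2) + sc (c1 * c2) one"
      by (simp add: xy mul_add_left mul_add_right scale_right_distrib mult.commute
          add.assoc add.left_commute)
    moreover have "mul j1 j2 + sc c2 j1 + sc c1 j2 \<in> J"
      using j JI subspace_add[OF Jsub] subspace_scale[OF Jsub] by metis
    ultimately show ?thesis by blast
  qed
  ultimately show ?thesis using generated[of ?S] by blast
qed

lemma nonzero_commuting_element_in_ideal:
  assumes I: "two_sided_ideal sc mul I" "I \<noteq> {0}"
    and lowers: "\<And>a n u. a \<in> V \<Longrightarrow> u \<in> pbw_filt sc mul one V (Suc n) \<Longrightarrow>
      mul a u - mul u a \<in> pbw_filt sc mul one V n"
  obtains u where "u \<in> I" "u \<noteq> 0" "\<And>a. a \<in> V \<Longrightarrow> mul u a = mul a u"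
proof -
  define P where "P n \<longleftrightarrow> (\<exists>u\<in>I. u \<noteq> 0 \<and> u \<in> pbw_filt sc mul one V n)" for n
  have "0 \<in> I" using I(1) subspace_0 by (simp add: two_sided_ideal_def)
  then obtain u0 where "u0 \<in> I" "u0 \<noteq> 0" using I(2) by blast
  then have "\<exists>n. P n" using pbw_filt_exhaustive[of u0] unfolding P_def by blast
  then obtain n where "P n" and least: "\<And>m. m < n \<Longrightarrow> \<not> P m"
    by (metis exists_least_iff)
  then obtain u where u: "u \<in> I" "u \<noteq> 0" "u \<in> pbw_filt sc mul one V n"
    unfolding P_def by blast
  have "mul u a = mul a u" if "a \<in> V" for a
  proof (cases n)
    case 0
    then obtain c where "u = sc c one" using pbw_filt_zero u(3) by blast
    then show ?thesis by simp
  next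
    case (Suc m)
    have "mul a u - mul u a \<in> I"
      using I(1) u(1) subspace_diff by (simp add: two_sided_ideal_def)
    moreover have "mul a u - mul u a \<in> pbw_filt sc mul one V m" using lowers that u(3) Suc by blast
    ultimately show ?thesis using least[of m] Suc unfolding P_def by auto
  qed
  then show ?thesis using that u by blast
qed

end

lemma is_env_algebra_generated_algebra:
  assumes "is_env_algebra sc mul one cop eps V tp"
  shows "generated_algebra sc mul one V"
proof -
  have "nonassoc_bialgebra sc mul one cop eps"
    and generated: "\<forall>S. module.subspace sc S \<and> one \<in> S \<and> V \<subseteq> S \<and> (\<forall>x\<in>S. \<forall>y\<in>S. mul x y \<in> S)
      \<longrightarrow> S = UNIV"
    using assms by (simp_all add: is_env_algebra_def)
  then interpret unital_algebra sc mul one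
    by (simp add: unital_algebra_def unital_algebra_axioms_def nonassoc_bialgebra_def)
  show ?thesis using generated by unfold_locales blast
qed

theorem lemma5p1:
  fixes sc :: "'k::field_char_0 \<Rightarrow> 'u::ab_group_add \<Rightarrow> 'u"
    and mul :: "'u \<Rightarrow> 'u \<Rightarrow> 'u" and one :: 'u
    and cop :: "'u \<Rightarrow> ('u \<times> 'u) list" and eps :: "'u \<Rightarrow> 'k"
    and V :: "'u set" and tp :: "'u \<Rightarrow> 'u \<Rightarrow> 'u \<Rightarrow> 'u"
  assumes simple: "simple_lts sc V tp"
    and env: "is_env_algebra sc mul one cop eps V tp"
    and centr: "\<forall>u. (\<forall>x\<in>V. mul u x = mul x u) \<longrightarrow> (\<exists>c. \<exists>x\<in>V. u = sc c one + x)"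
    and I: "two_sided_ideal sc mul I" "I \<noteq> {0}" "I \<noteq> UNIV"
  shows "I = {u. eps u = 0}"
proof -
  interpret generated_algebra sc mul one V
    using env by (rule is_env_algebra_generated_algebra)
  have tp_mul: "\<And>a b c. a \<in> V \<Longrightarrow> b \<in> V \<Longrightarrow> c \<in> V \<Longrightarrow> mul a (mul b c) - mul b (mul a c) = tp a b c"
    and lowers: "\<And>a n u. a \<in> V \<Longrightarrow> u \<in> pbw_filt sc mul one V (Suc n) \<Longrightarrow>
      mul a u - mul u a \<in> pbw_filt sc mul one V n"
    and eps: "lin_form sc eps" "\<And>x y. eps (mul x y) = eps x * eps y" "eps one = 1"
    using env by (simp_all add: is_env_algebra_def nonassoc_bialgebra_def)
  obtain u where u: "u \<in> I" "u \<noteq> 0" "\<And>a. a \<in> V \<Longrightarrow> mul u a = mul a u"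
    using nonzero_commuting_element_in_ideal[OF I(1,2) lowers] by blast
  then obtain c x where "x \<in> V" "u = sc c one + x" using centr by metis
  then have V_I: "V \<subseteq> I" using lts_subset_ideal[OF simple tp_mul I(1,3)] u by blast
  have "eps (tp a b c) = 0" if "a \<in> V" "b \<in> V" "c \<in> V" for a b c
    using tp_mul[OF that, symmetric] additive.diff[OF lin_form_additive[OF eps(1)]] by (simp add: eps(2))
  then have "V \<subseteq> {u. eps u = 0}" using simple_lts_lin_form_vanishes[OF simple eps(1)] by blast
  then have "\<exists>j \<in> I \<inter> {u. eps u = 0}. \<exists>c. w = j + sc c one" for w
    using V_I two_sided_ideal_Int[OF I(1) two_sided_ideal_kernel[OF eps(1,2)]]
    by (intro ideal_plus_scalars_eq_UNIV) auto
  moreover have "subspace I" "one \<notin> I"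
    using I(1,3) two_sided_ideal_eq_UNIV_iff by (auto simp: two_sided_ideal_def)
  ultimately show ?thesis using eq_kernel_of_decomposition[OF _ _ eps(1,3)] by blast
qed

end
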